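(* Let $n\ge2$ be an integer and write $n-1=\sum_{i=0}^m p_i2^i$ with $p_i\in\{0,1\}$ and $p_m=1$; let $I=\{i\mid p_i=1\}$. In the standard MV-algebra $[0,1]_{\text{Ł}}$, the system of equations $y_0=\neg x$, $y_j=y_{j-1}^2$ for $j=1,\dots,m$, and $x=\prod_{i\in I}y_i$ has a unique solution, and in it $x=1/n$.
   Context: Standard MV-algebra $[0,1]_{\text{Ł}}$: domain $[0,1]$, $x\cdot y=\max(0,x+y-1)$, $\neg x=1-x$. Powers $y^2=y\cdot y$ and the product $\prod$ refer to the operation $\cdot$. *)

theory Defs
  imports Main "HOL.Real"
begin

definition luk_mult :: "real \<Rightarrow> real \<Rightarrow> real" where
  "luk_mult x y = max 0 (x + y - 1)"

definition luk_neg :: "real \<Rightarrow> real" where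
  "luk_neg x = 1 - x"

definition luk_prod :: "(nat \<Rightarrow> real) \<Rightarrow> nat list \<Rightarrow> real" where
  "luk_prod f is = foldr (\<lambda>i a. luk_mult (f i) a) is 1"

definition luk_system :: "nat \<Rightarrow> (nat \<Rightarrow> nat) \<Rightarrow> real \<times> real list \<Rightarrow> bool" where
  "luk_system m p s = (let x = fst s; y = snd s in
     length y = m + 1 \<and> x \<in> {0..1} \<and> (\<forall>j\<le>m. y ! j \<in> {0..1}) \<and>
     y ! 0 = luk_neg x \<and>
     (\<forall>j. 1 \<le> j \<and> j \<le> m \<longrightarrow> y ! j = luk_mult (y ! (j - 1)) (y ! (j - 1))) \<and>
     x = luk_prod (\<lambda>i. y ! i) (filter (\<lambda>i. p i = 1) [0..<m+1]))"

end

theory Submission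
  imports Defs
begin

text \<open>Write \<open>t(a) = max 0 (1 - a)\<close>. For \<open>a, b \<ge> 0\<close> the Lukasiewicz product satisfies
  \<open>t(a) \<cdot> t(b) = t(a + b)\<close>, so the system forces \<open>y\<^sub>j = t(2\<^sup>j x)\<close> and
  \<open>x = t((\<Sum>i\<in>I. 2\<^sup>i) x) = t((n - 1) x)\<close>, whose only solution in \<open>[0,1]\<close> is \<open>x = 1/n\<close>;
  conversely these values solve the system.\<close>

definition luk_trunc :: "real \<Rightarrow> real" where
  "luk_trunc a = max 0 (1 - a)"

lemma luk_mult_trunc:
  assumes "a \<ge> 0" "b \<ge> 0"
  shows "luk_mult (luk_trunc a) (luk_trunc b) = luk_trunc (a + b)"
  using assms unfolding luk_mult_def luk_trunc_def by (auto simp: max_def)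

lemma luk_prod_cong:
  assumes "\<forall>i\<in>set is. f i = g i"
  shows "luk_prod f is = luk_prod g is"
  using assms unfolding luk_prod_def by (intro foldr_cong) auto

lemma luk_prod_trunc:
  assumes "\<forall>i\<in>set is. a i \<ge> 0"
  shows "luk_prod (\<lambda>i. luk_trunc (a i)) is = luk_trunc (sum_list (map a is))"
  using assms
proof (induction "is")
  case Nil
  then show ?case by (simp add: luk_prod_def luk_trunc_def)
next
  case (Cons i "is")
  then have "sum_list (map a is) \<ge> 0"
    by (intro sum_list_nonneg) auto
  with Cons show ?case
    by (simp add: luk_prod_def luk_mult_trunc)
qed

lemma luk_trunc_fixpoint_iff:
  fixes c x :: real
  assumes "c \<ge> 0"
  shows "x \<in> {0..1} \<and> x = luk_trunc (c * x) \<longleftrightarrow> x = 1 / (1 + c)"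
proof
  assume x: "x \<in> {0..1} \<and> x = luk_trunc (c * x)"
  then have "x \<noteq> 0"
    by (auto simp: luk_trunc_def)
  with x have "(1 + c) * x = 1"
    by (auto simp: luk_trunc_def max_def algebra_simps split: if_splits)
  then show "x = 1 / (1 + c)"
    using assms by (simp add: field_simps)
next
  assume x: "x = 1 / (1 + c)"
  then have "x \<in> {0..1}"
    using assms by simp
  moreover have "1 - c * x = x"
    using x assms by (simp add: field_simps)
  ultimately show "x \<in> {0..1} \<and> x = luk_trunc (c * x)"
    by (simp add: luk_trunc_def)
qed

lemma sum_list_filter_binary_digits:
  assumes "\<forall>i\<le>m. p i \<in> {0, 1}"
  shows "(\<Sum>i\<leftarrow>filter (\<lambda>i. p i = 1) [0..<m+1]. 2 ^ i)
       = (\<Sum>i\<le>m. of_nat (p i) * 2 ^ i :: 'a :: comm_semiring_1)"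
proof -
  have "set (filter (\<lambda>i. p i = 1) [0..<m+1]) = {i \<in> {..m}. p i = 1}"
    by (simp only: set_filter set_upt) fastforce
  then have "(\<Sum>i\<leftarrow>filter (\<lambda>i. p i = 1) [0..<m+1]. 2 ^ i)
      = (\<Sum>i \<in> {i \<in> {..m}. p i = 1}. 2 ^ i :: 'a)"
    by (simp add: sum_list_distinct_conv_sum_set del: upt_Suc)
  also have "\<dots> = (\<Sum>i\<le>m. if p i = 1 then 2 ^ i else 0)"
    using sum.inter_filter[of "{..m}" "\<lambda>i. (2::'a) ^ i" "\<lambda>i. p i = 1"] by simp
  also have "\<dots> = (\<Sum>i\<le>m. of_nat (p i) * 2 ^ i)"
    using assms by (intro sum.cong) auto
  finally show ?thesis .
qed

lemma luk_prod_powers_trunc: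
  fixes x :: real
  assumes "x \<ge> 0" and "\<forall>j\<le>m. y ! j = luk_trunc (2 ^ j * x)"
  shows "luk_prod (\<lambda>i. y ! i) (filter P [0..<m+1])
       = luk_trunc ((\<Sum>i\<leftarrow>filter P [0..<m+1]. 2 ^ i) * x)"
proof -
  have "luk_prod (\<lambda>i. y ! i) (filter P [0..<m+1])
      = luk_prod (\<lambda>i. luk_trunc (2 ^ i * x)) (filter P [0..<m+1])"
    using assms(2) by (intro luk_prod_cong) (auto simp del: upt_Suc)
  also have "\<dots> = luk_trunc ((\<Sum>i\<leftarrow>filter P [0..<m+1]. 2 ^ i) * x)"
    using assms(1) by (simp add: luk_prod_trunc sum_list_mult_const del: upt_Suc)
  finally show ?thesis .
qed

lemma luk_system_nth:
  assumes "luk_system m p (x, y)" and "j \<le> m"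
  shows "y ! j = luk_trunc (2 ^ j * x)"
  using assms(2)
proof (induction j)
  case 0
  then show ?case
    using assms(1) by (simp add: luk_system_def luk_neg_def luk_trunc_def)
next
  case (Suc j)
  then have "y ! Suc j = luk_mult (luk_trunc (2 ^ j * x)) (luk_trunc (2 ^ j * x))"
    using assms(1) by (auto simp: luk_system_def)
  moreover have "x \<ge> 0"
    using assms(1) by (simp add: luk_system_def)
  ultimately show ?case
    by (simp add: luk_mult_trunc mult_ac)
qed

lemma luk_system_iff:
  fixes m :: nat and p :: "nat \<Rightarrow> nat" and x N :: real and y :: "real list"
  defines "N \<equiv> (\<Sum>i\<leftarrow>filter (\<lambda>i. p i = 1) [0..<m+1]. 2 ^ i)"
  shows "luk_system m p (x, y) \<longleftrightarrow>
    x \<in> {0..1} \<and> y = map (\<lambda>j. luk_trunc (2 ^ j * x)) [0..<m+1] \<and> x = luk_trunc (N * x)"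
proof
  assume sys: "luk_system m p (x, y)"
  then have x: "x \<in> {0..1}" and "length y = m + 1"
    by (simp_all add: luk_system_def)
  then have "y = map (\<lambda>j. luk_trunc (2 ^ j * x)) [0..<m+1]"
    using luk_system_nth[OF sys] by (intro nth_equalityI) (auto simp del: upt_Suc)
  moreover have "x = luk_trunc (N * x)"
    using sys x luk_system_nth[OF sys] luk_prod_powers_trunc[of x m y "\<lambda>i. p i = 1"]
    by (simp add: luk_system_def N_def del: upt_Suc)
  ultimately show "x \<in> {0..1} \<and> y = map (\<lambda>j. luk_trunc (2 ^ j * x)) [0..<m+1] \<and> x = luk_trunc (N * x)"
    using x by blast
next
  assume "x \<in> {0..1} \<and> y = map (\<lambda>j. luk_trunc (2 ^ j * x)) [0..<m+1] \<and> x = luk_trunc (N * x)"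
  then have x: "x \<in> {0..1}" and y: "y = map (\<lambda>j. luk_trunc (2 ^ j * x)) [0..<m+1]"
    and fix_x: "x = luk_trunc (N * x)" by blast+
  have y_nth: "\<forall>j\<le>m. y ! j = luk_trunc (2 ^ j * x)"
    using y by (simp del: upt_Suc add: nth_append)
  have "y ! j = luk_mult (y ! (j - 1)) (y ! (j - 1))" if "1 \<le> j" "j \<le> m" for j
  proof -
    obtain k where "j = Suc k" using \<open>1 \<le> j\<close> by (cases j) auto
    then show ?thesis using that x y_nth by (simp add: luk_mult_trunc mult_ac)
  qed
  moreover have "\<forall>j\<le>m. y ! j \<in> {0..1}"
    using x y_nth by (auto simp: luk_trunc_def)
  moreover have "y ! 0 = luk_neg x"
    using x y_nth by (simp add: luk_neg_def luk_trunc_def)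
  moreover have "length y = m + 1"
    using y by simp
  moreover have "x = luk_prod (\<lambda>i. y ! i) (filter (\<lambda>i. p i = 1) [0..<m+1])"
    using fix_x x y_nth luk_prod_powers_trunc[of x m y "\<lambda>i. p i = 1"] by (simp add: N_def)
  ultimately show "luk_system m p (x, y)"
    using x unfolding luk_system_def Let_def fst_conv snd_conv by blast
qed

theorem lemma4p1:
  fixes n m :: nat and p :: "nat \<Rightarrow> nat"
  assumes "n \<ge> 2"
    and "\<forall>i\<le>m. p i \<in> {0, 1}"
    and "p m = 1"
    and "n - 1 = (\<Sum>i\<le>m. p i * 2 ^ i)"
  shows "(\<exists>!s. luk_system m p s) \<and> (\<forall>s. luk_system m p s \<longrightarrow> fst s = 1 / real n)"
proof -
  define y where "y x = map (\<lambda>j. luk_trunc (2 ^ j * x)) [0..<m+1]" for x :: real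
  have "(\<Sum>i\<leftarrow>filter (\<lambda>i. p i = 1) [0..<m+1]. 2 ^ i) = (\<Sum>i\<le>m. real (p i) * 2 ^ i)"
    by (rule sum_list_filter_binary_digits[OF assms(2)])
  also have "\<dots> = real (n - 1)"
    unfolding assms(4) by simp
  also have "\<dots> = real n - 1"
    using assms(1) by simp
  finally have N: "(\<Sum>i\<leftarrow>filter (\<lambda>i. p i = 1) [0..<m+1]. 2 ^ i) = real n - 1" .
  have "luk_system m p (x, ys) \<longleftrightarrow> (x, ys) = (1 / real n, y (1 / real n))" for x ys
  proof -
    have "luk_system m p (x, ys) \<longleftrightarrow>
        x \<in> {0..1} \<and> ys = y x \<and> x = luk_trunc ((real n - 1) * x)"
      unfolding luk_system_iff N y_def ..
    also have "\<dots> \<longleftrightarrow> x = 1 / real n \<and> ys = y x"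
      using luk_trunc_fixpoint_iff[of "real n - 1" x] assms(1) by auto
    finally show ?thesis by auto
  qed
  then have "luk_system m p s \<longleftrightarrow> s = (1 / real n, y (1 / real n))" for s
    by (cases s) simp
  then show ?thesis
    by auto
qed

end
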